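(* Let $C$ be a contractible globular extension equipped with a pregroupoidal structure and let $G$ be an $\infty$-groupoid of type $C$. For every $n\ge 0$, the relation $\sim$ on $G_n$ is an equivalence relation. Moreover, for $n\ge 1$, if $u\sim u'$ and $v\sim v'$ are $n$-arrows with $s(v)=t(u)$ (hence $s(v')=t(u')$), then $v\ast^n_{n-1}u\sim v'\ast^n_{n-1}u'$.
   Context: Globe category and globular extensions: The globe category $\mathbb{G}$ is the category with objects $D_n$ ($n\ge 0$), generated by morphisms $\sigma_n,\tau_n\colon D_{n-1}\to D_n$ ($n\ge 1$) subject to $\sigma_{n+1}\sigma_n=\tau_{n+1}\sigma_n$ and $\sigma_{n+1}\tau_n=\tau_{n+1}\tau_n$. For $i\ge j\ge 0$ put $\sigma^i_j=\sigma_i\cdots\sigma_{j+1}$ and $\tau^i_j=\tau_i\cdots\tau_{j+1}\colon D_j\to D_i$. A table of dimensions of width $n\ge 1$ consists of integers $i_1,\dots,i_n,i'_1,\dots,i'_{n-1}\ge 0$ with $i_k>i'_k$ and $i_{k+1}>i'_k$; its dimension is the largest integer occurring in it. If $C$ is a category with a functor $\mathbb{G}\to C$, the globular sum associated to such a table is the colimit in $C$ (if it exists) of the zig-zag $D_{i_1}\xleftarrow{\sigma^{i_1}_{i'_1}}D_{i'_1}\xrightarrow{\tau^{i_2}_{i'_1}}D_{i_2}\leftarrow\cdots\leftarrow D_{i'_{n-1}}\xrightarrow{\tau^{i_n}_{i'_{n-1}}}D_{i_n}$, written $D_{i_1}\amalg_{D_{i'_1}}\cdots\amalg_{D_{i'_{n-1}}}D_{i_n}$;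 its dimension is that of the table. A globular extension is a category $C$ with a functor $\mathbb{G}\to C$ in which all globular sums exist. Two morphisms $f,g\colon D_n\to X$ are globularly parallel if $n=0$, or $f\sigma_n=g\sigma_n$ and $f\tau_n=g\tau_n$. A lifting of $(f,g)$ is $h\colon D_{n+1}\to X$ with $h\sigma_{n+1}=f$, $h\tau_{n+1}=g$. A pair $(f,g)\colon D_n\to S$ is admissible if $f,g$ are globularly parallel and $S$ is a globular sum of dimension at most $n+1$; $C$ is contractible if every admissible pair admits a lifting. $\infty$-groupoids: For $C$ a contractible globular extension, an $\infty$-groupoid of type $C$ is a presheaf $G$ on $C$ such that for every table of dimensions the canonical map $G(D_{i_1}\amalg_{D_{i'_1}}\cdots\amalg_{D_{i'_{n-1}}}D_{i_n})\to G_{i_1}\times_{G_{i'_1}}\cdots\times_{G_{i'_{n-1}}}G_{i_n}$ is a bijection; here $G_i=G(D_i)$ is the set of $i$-arrows, the source and target of an $i$-arrow $u$ ($i\ge1$) are $s(u)=G(\sigma_i)(u)$ and $t(u)=G(\tau_i)(u)$, $s^i_j=G(\sigma^i_j)$, $t^i_j=G(\tau^i_j)$, and the fiber product consists of tuples $(u_1,\dots,u_n)$ with $s^{i_k}_{i'_k}(u_k)=t^{i_{k+1}}_{i'_k}(u_{k+1})$. Morphisms are natural transformations. Two $i$-arrows are parallel if $i=0$ or they have the same source and target. Pregroupoidal structure: morphisms $\nabla^i_j\colon D_i\to D_i\amalg_{D_j}D_i$ ($i>j\ge 0$), $\kappa_i\colon D_{i+1}\to D_i$ ($i\ge 0$),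 $w^i_j\colon D_i\to D_i$ ($i>j\ge0$) of $C$ such that $\nabla^i_{i-1}\sigma_i=\epsilon_2\sigma_i$ and $\nabla^i_{i-1}\tau_i=\epsilon_1\tau_i$ (with $\epsilon_1,\epsilon_2\colon D_i\to D_i\amalg_{D_{i-1}}D_i$ the canonical morphisms to the first and second summand), $\nabla^i_j\sigma_i=(\sigma_i\amalg_{D_j}\sigma_i)\nabla^{i-1}_j$ and $\nabla^i_j\tau_i=(\tau_i\amalg_{D_j}\tau_i)\nabla^{i-1}_j$ for $j<i-1$, $\kappa_i\sigma_{i+1}=\kappa_i\tau_{i+1}=\mathrm{id}_{D_i}$, $w^i_{i-1}\sigma_i=\tau_i$, $w^i_{i-1}\tau_i=\sigma_i$, and $w^i_j\sigma_i=\sigma_iw^{i-1}_j$, $w^i_j\tau_i=\tau_iw^{i-1}_j$ for $j<i-1$ (such a structure exists on every contractible globular extension). On an $\infty$-groupoid $G$ of type $C$ this induces compositions $\ast^i_j$: for $i$-arrows $v,u$ with $s^i_j(v)=t^i_j(u)$, $v\ast^i_ju=G(\nabla^i_j)(\xi)$ where $\xi\in G(D_i\amalg_{D_j}D_i)$ corresponds to $(v,u)$ under the canonical bijection with $G_i\times_{G_j}G_i$; units $k_i=G(\kappa_i)\colon G_i\to G_{i+1}$ with $k^i_j=k_{i-1}\cdots k_j$; inverses $G(w^i_j)$. Homotopy: for $n$-arrows $u,v$ of $G$, $u\sim v$ means there is an $(n+1)$-arrow with source $u$ and target $v$. *)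

theory Defs
  imports Main
begin

record ('o, 'm) cat =
  Ob   :: "'o set"
  Mor  :: "'m set"
  Dom  :: "'m \<Rightarrow> 'o"
  Cod  :: "'m \<Rightarrow> 'o"
  Idm  :: "'o \<Rightarrow> 'm"
  Comp :: "'m \<Rightarrow> 'm \<Rightarrow> 'm"   (* Comp g f = g o f *)

definition hom :: "('o, 'm, 'x) cat_scheme \<Rightarrow> 'o \<Rightarrow> 'o \<Rightarrow> 'm set" where
  "hom C X Y = {f \<in> Mor C. Dom C f = X \<and> Cod C f = Y}"

definition category :: "('o, 'm, 'x) cat_scheme \<Rightarrow> bool" where
  "category C \<longleftrightarrow>
     (\<forall>f \<in> Mor C. Dom C f \<in> Ob C \<and> Cod C f \<in> Ob C) \<and>
     (\<forall>X \<in> Ob C. Idm C X \<in> hom C X X) \<and>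
     (\<forall>f \<in> Mor C. \<forall>g \<in> Mor C. Cod C f = Dom C g \<longrightarrow>
         Comp C g f \<in> hom C (Dom C f) (Cod C g)) \<and>
     (\<forall>f \<in> Mor C. Comp C f (Idm C (Dom C f)) = f \<and> Comp C (Idm C (Cod C f)) f = f) \<and>
     (\<forall>f \<in> Mor C. \<forall>g \<in> Mor C. \<forall>h \<in> Mor C. Cod C f = Dom C g \<longrightarrow> Cod C g = Dom C h \<longrightarrow>
         Comp C h (Comp C g f) = Comp C (Comp C h g) f)"

text \<open>A functor from the globe category to C is exactly the data of objects D n and
  morphisms sg n, tg n : D (n-1) -> D n (n >= 1) satisfying the globular relations.\<close>

record ('o, 'm) gcat = "('o, 'm) cat" +
  Dk :: "nat \<Rightarrow> 'o"
  sg :: "nat \<Rightarrow> 'm"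
  tg :: "nat \<Rightarrow> 'm"

definition globe_functor :: "('o, 'm, 'x) gcat_scheme \<Rightarrow> bool" where
  "globe_functor C \<longleftrightarrow>
     (\<forall>n. Dk C n \<in> Ob C) \<and>
     (\<forall>n \<ge> 1. sg C n \<in> hom C (Dk C (n - 1)) (Dk C n) \<and> tg C n \<in> hom C (Dk C (n - 1)) (Dk C n)) \<and>
     (\<forall>n \<ge> 1. Comp C (sg C (n + 1)) (sg C n) = Comp C (tg C (n + 1)) (sg C n) \<and>
              Comp C (sg C (n + 1)) (tg C n) = Comp C (tg C (n + 1)) (tg C n))"

fun sgit :: "('o, 'm, 'x) gcat_scheme \<Rightarrow> nat \<Rightarrow> nat \<Rightarrow> 'm" where
  "sgit C 0 j = Idm C (Dk C j)"
| "sgit C (Suc k) j = Comp C (sg C (j + Suc k)) (sgit C k j)"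

fun tgit :: "('o, 'm, 'x) gcat_scheme \<Rightarrow> nat \<Rightarrow> nat \<Rightarrow> 'm" where
  "tgit C 0 j = Idm C (Dk C j)"
| "tgit C (Suc k) j = Comp C (tg C (j + Suc k)) (tgit C k j)"

definition sigma :: "('o, 'm, 'x) gcat_scheme \<Rightarrow> nat \<Rightarrow> nat \<Rightarrow> 'm" where
  "sigma C i j = sgit C (i - j) j"   (* sigma^i_j : D_j -> D_i, for i >= j *)

definition tau :: "('o, 'm, 'x) gcat_scheme \<Rightarrow> nat \<Rightarrow> nat \<Rightarrow> 'm" where
  "tau C i j = tgit C (i - j) j"

text \<open>A table of width n: the list is = [i_1,...,i_n] and js = [i'_1,...,i'_{n-1}].\<close>

definition is_table :: "nat list \<Rightarrow> nat list \<Rightarrow> bool" where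
  "is_table is js \<longleftrightarrow> length is \<ge> 1 \<and> length js = length is - 1 \<and>
     (\<forall>k < length js. is ! k > js ! k \<and> is ! (k + 1) > js ! k)"

definition tdim :: "nat list \<Rightarrow> nat list \<Rightarrow> nat" where
  "tdim is js = Max (set (is @ js))"

text \<open>Cocones under the zig-zag diagram of a table, with apex S and legs e k : D_{i_k} -> S.\<close>

definition is_cocone :: "('o, 'm, 'x) gcat_scheme \<Rightarrow> nat list \<Rightarrow> nat list \<Rightarrow> 'o \<Rightarrow> (nat \<Rightarrow> 'm) \<Rightarrow> bool" where
  "is_cocone C is js S e \<longleftrightarrow> S \<in> Ob C \<and>
     (\<forall>k < length is. e k \<in> hom C (Dk C (is ! k)) S) \<and>
     (\<forall>k < length js. Comp C (e k) (sigma C (is ! k) (js ! k)) =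
                     Comp C (e (k + 1)) (tau C (is ! (k + 1)) (js ! k)))"

definition is_colimit :: "('o, 'm, 'x) gcat_scheme \<Rightarrow> nat list \<Rightarrow> nat list \<Rightarrow> 'o \<Rightarrow> (nat \<Rightarrow> 'm) \<Rightarrow> bool" where
  "is_colimit C is js S e \<longleftrightarrow> is_cocone C is js S e \<and>
     (\<forall>T f. is_cocone C is js T f \<longrightarrow>
        (\<exists>!h. h \<in> hom C S T \<and> (\<forall>k < length is. Comp C h (e k) = f k)))"

definition globular_extension :: "('o, 'm, 'x) gcat_scheme \<Rightarrow> bool" where
  "globular_extension C \<longleftrightarrow> category C \<and> globe_functor C \<and>
     (\<forall>is js. is_table is js \<longrightarrow> (\<exists>S e. is_colimit C is js S e))"

definition glob_parallel :: "('o, 'm, 'x) gcat_scheme \<Rightarrow> nat \<Rightarrow> 'm \<Rightarrow> 'm \<Rightarrow> bool" where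
  "glob_parallel C n f g \<longleftrightarrow> n = 0 \<or>
     (Comp C f (sg C n) = Comp C g (sg C n) \<and> Comp C f (tg C n) = Comp C g (tg C n))"

definition contractible :: "('o, 'm, 'x) gcat_scheme \<Rightarrow> bool" where
  "contractible C \<longleftrightarrow> globular_extension C \<and>
     (\<forall>n f g is js S e.
        is_table is js \<and> tdim is js \<le> n + 1 \<and> is_colimit C is js S e \<and>
        f \<in> hom C (Dk C n) S \<and> g \<in> hom C (Dk C n) S \<and> glob_parallel C n f g \<longrightarrow>
        (\<exists>h \<in> hom C (Dk C (n + 1)) S. Comp C h (sg C (n + 1)) = f \<and> Comp C h (tg C (n + 1)) = g))"

text \<open>Psum i j is a chosen globular sum D_i amalg_{D_j} D_i with canonical morphisms
  eps1 i j (first summand) and eps2 i j (second summand).\<close>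

record ('o, 'm) pregr =
  Psum :: "nat \<Rightarrow> nat \<Rightarrow> 'o"
  eps1 :: "nat \<Rightarrow> nat \<Rightarrow> 'm"
  eps2 :: "nat \<Rightarrow> nat \<Rightarrow> 'm"
  nab  :: "nat \<Rightarrow> nat \<Rightarrow> 'm"
  kap  :: "nat \<Rightarrow> 'm"
  winv :: "nat \<Rightarrow> nat \<Rightarrow> 'm"

definition pregroupoidal :: "('o, 'm, 'x) gcat_scheme \<Rightarrow> ('o, 'm) pregr \<Rightarrow> bool" where
  "pregroupoidal C P \<longleftrightarrow>
     (\<forall>i j. j < i \<longrightarrow>
        is_colimit C [i, i] [j] (Psum P i j) (\<lambda>k. if k = 0 then eps1 P i j else eps2 P i j) \<and>
        nab P i j \<in> hom C (Dk C i) (Psum P i j) \<and>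
        winv P i j \<in> hom C (Dk C i) (Dk C i)) \<and>
     (\<forall>i \<ge> 1.
        Comp C (nab P i (i - 1)) (sg C i) = Comp C (eps2 P i (i - 1)) (sg C i) \<and>
        Comp C (nab P i (i - 1)) (tg C i) = Comp C (eps1 P i (i - 1)) (tg C i)) \<and>
     (\<forall>i j. j + 1 < i \<longrightarrow>
        (\<forall>m. m \<in> hom C (Psum P (i - 1) j) (Psum P i j) \<and>
              Comp C m (eps1 P (i - 1) j) = Comp C (eps1 P i j) (sg C i) \<and>
              Comp C m (eps2 P (i - 1) j) = Comp C (eps2 P i j) (sg C i) \<longrightarrow>
              Comp C (nab P i j) (sg C i) = Comp C m (nab P (i - 1) j)) \<and>
        (\<forall>m. m \<in> hom C (Psum P (i - 1) j) (Psum P i j) \<and>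
              Comp C m (eps1 P (i - 1) j) = Comp C (eps1 P i j) (tg C i) \<and>
              Comp C m (eps2 P (i - 1) j) = Comp C (eps2 P i j) (tg C i) \<longrightarrow>
              Comp C (nab P i j) (tg C i) = Comp C m (nab P (i - 1) j))) \<and>
     (\<forall>i. kap P i \<in> hom C (Dk C (i + 1)) (Dk C i) \<and>
          Comp C (kap P i) (sg C (i + 1)) = Idm C (Dk C i) \<and>
          Comp C (kap P i) (tg C (i + 1)) = Idm C (Dk C i)) \<and>
     (\<forall>i \<ge> 1. Comp C (winv P i (i - 1)) (sg C i) = tg C i \<and>
              Comp C (winv P i (i - 1)) (tg C i) = sg C i) \<and>
     (\<forall>i j. j + 1 < i \<longrightarrow>
        Comp C (winv P i j) (sg C i) = Comp C (sg C i) (winv P (i - 1) j) \<and>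
        Comp C (winv P i j) (tg C i) = Comp C (tg C i) (winv P (i - 1) j))"

record ('o, 'm, 'a) presh =
  Gob  :: "'o \<Rightarrow> 'a set"
  Gmor :: "'m \<Rightarrow> 'a \<Rightarrow> 'a"

definition presheaf :: "('o, 'm, 'x) cat_scheme \<Rightarrow> ('o, 'm, 'a) presh \<Rightarrow> bool" where
  "presheaf C G \<longleftrightarrow>
     (\<forall>f \<in> Mor C. \<forall>x \<in> Gob G (Cod C f). Gmor G f x \<in> Gob G (Dom C f)) \<and>
     (\<forall>f \<in> Mor C. \<forall>g \<in> Mor C. Cod C f = Dom C g \<longrightarrow>
        (\<forall>x \<in> Gob G (Cod C g). Gmor G (Comp C g f) x = Gmor G f (Gmor G g x))) \<and>
     (\<forall>X \<in> Ob C. \<forall>x \<in> Gob G X. Gmor G (Idm C X) x = x)"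

text \<open>The fiber product G_{i_1} x_{G_{i'_1}} ... x_{G_{i'_{n-1}}} G_{i_n}, as lists.\<close>

definition fiber_prod :: "('o, 'm, 'x) gcat_scheme \<Rightarrow> ('o, 'm, 'a) presh \<Rightarrow> nat list \<Rightarrow> nat list \<Rightarrow> 'a list set" where
  "fiber_prod C G is js = {us. length us = length is \<and>
      (\<forall>k < length is. us ! k \<in> Gob G (Dk C (is ! k))) \<and>
      (\<forall>k < length js. Gmor G (sigma C (is ! k) (js ! k)) (us ! k) =
                      Gmor G (tau C (is ! (k + 1)) (js ! k)) (us ! (k + 1)))}"

definition infty_groupoid :: "('o, 'm, 'x) gcat_scheme \<Rightarrow> ('o, 'm, 'a) presh \<Rightarrow> bool" where
  "infty_groupoid C G \<longleftrightarrow> contractible C \<and> presheaf C G \<and>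
     (\<forall>is js S e. is_table is js \<and> is_colimit C is js S e \<longrightarrow>
        bij_betw (\<lambda>x. map (\<lambda>k. Gmor G (e k) x) [0..<length is]) (Gob G S) (fiber_prod C G is js))"

definition src :: "('o, 'm, 'x) gcat_scheme \<Rightarrow> ('o, 'm, 'a) presh \<Rightarrow> nat \<Rightarrow> 'a \<Rightarrow> 'a" where
  "src C G n u = Gmor G (sg C n) u"

definition tgt :: "('o, 'm, 'x) gcat_scheme \<Rightarrow> ('o, 'm, 'a) presh \<Rightarrow> nat \<Rightarrow> 'a \<Rightarrow> 'a" where
  "tgt C G n u = Gmor G (tg C n) u"

text \<open>v *^i_j u = G(nabla^i_j)(xi), xi the element of G(D_i amalg_{D_j} D_i) corresponding to (v,u).\<close>

definition gcomp :: "('o, 'm, 'x) gcat_scheme \<Rightarrow> ('o, 'm) pregr \<Rightarrow> ('o, 'm, 'a) presh \<Rightarrow> nat \<Rightarrow> nat \<Rightarrow> 'a \<Rightarrow> 'a \<Rightarrow> 'a" where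
  "gcomp C P G i j v u = Gmor G (nab P i j)
     (THE xi. xi \<in> Gob G (Psum P i j) \<and> Gmor G (eps1 P i j) xi = v \<and> Gmor G (eps2 P i j) xi = u)"

definition homotopic :: "('o, 'm, 'x) gcat_scheme \<Rightarrow> ('o, 'm, 'a) presh \<Rightarrow> nat \<Rightarrow> 'a \<Rightarrow> 'a \<Rightarrow> bool" where
  "homotopic C G n u v \<longleftrightarrow> (\<exists>a \<in> Gob G (Dk C (n + 1)). src C G (n + 1) a = u \<and> tgt C G (n + 1) a = v)"

definition homrel :: "('o, 'm, 'x) gcat_scheme \<Rightarrow> ('o, 'm, 'a) presh \<Rightarrow> nat \<Rightarrow> ('a \<times> 'a) set" where
  "homrel C G n = {(u, v). u \<in> Gob G (Dk C n) \<and> v \<in> Gob G (Dk C n) \<and> homotopic C G n u v}"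

end

theory Submission
  imports Defs
begin

text \<open>
  Reflexivity, symmetry and transitivity come from the three operations of the
  pregroupoidal structure: the unit kappa_n, the inverse w^{n+1}_n and the composition
  *^{n+1}_n, whose source and target are those of the first and last factor.

  Compatibility with composition: if a : u ~> u' and b : v ~> v' are (n+1)-arrows with
  s(v) = t(u), then b and a are composable along dimension n-1 and the (n+1)-arrow
  b *^{n+1}_{n-1} a goes from v *^n_{n-1} u to v' *^n_{n-1} u'.  This rests on the general
  fact that source and target commute with *^i_j whenever j + 1 < i, which in turn follows
  from the naturality axioms on nabla^i_j together with the functoriality of the globular
  sums D_i amalg_{D_j} D_i in D_i.
\<close>

lemma comp_hom:
  "category C \<Longrightarrow> f \<in> hom C X Y \<Longrightarrow> g \<in> hom C Y Z \<Longrightarrow> Comp C g f \<in> hom C X Z"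
  unfolding category_def hom_def by auto

lemma comp_assoc:
  "category C \<Longrightarrow> f \<in> hom C X Y \<Longrightarrow> g \<in> hom C Y Z \<Longrightarrow> h \<in> hom C Z W \<Longrightarrow>
   Comp C h (Comp C g f) = Comp C (Comp C h g) f"
  unfolding category_def hom_def by auto

lemma id_hom: "category C \<Longrightarrow> X \<in> Ob C \<Longrightarrow> Idm C X \<in> hom C X X"
  unfolding category_def by auto

lemma comp_id_right: "category C \<Longrightarrow> f \<in> hom C X Y \<Longrightarrow> Comp C f (Idm C X) = f"
  unfolding category_def hom_def by auto

lemma presheaf_in:
  "presheaf C G \<Longrightarrow> f \<in> hom C X Y \<Longrightarrow> x \<in> Gob G Y \<Longrightarrow> Gmor G f x \<in> Gob G X"
  unfolding presheaf_def hom_def by auto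

lemma presheaf_comp:
  "presheaf C G \<Longrightarrow> f \<in> hom C X Y \<Longrightarrow> g \<in> hom C Y Z \<Longrightarrow> x \<in> Gob G Z \<Longrightarrow>
   Gmor G (Comp C g f) x = Gmor G f (Gmor G g x)"
  unfolding presheaf_def hom_def by auto

lemma presheaf_id: "presheaf C G \<Longrightarrow> X \<in> Ob C \<Longrightarrow> x \<in> Gob G X \<Longrightarrow> Gmor G (Idm C X) x = x"
  unfolding presheaf_def by auto

lemma Dk_Ob: "globe_functor C \<Longrightarrow> Dk C n \<in> Ob C"
  unfolding globe_functor_def by auto

lemma sg_hom: "globe_functor C \<Longrightarrow> sg C (Suc n) \<in> hom C (Dk C n) (Dk C (Suc n))"
  unfolding globe_functor_def by (elim conjE allE[where x="Suc n"]) simp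

lemma tg_hom: "globe_functor C \<Longrightarrow> tg C (Suc n) \<in> hom C (Dk C n) (Dk C (Suc n))"
  unfolding globe_functor_def by (elim conjE allE[where x="Suc n"]) simp

lemma globular_relations:
  assumes "globe_functor C"
  shows "Comp C (sg C (Suc (Suc n))) (sg C (Suc n)) = Comp C (tg C (Suc (Suc n))) (sg C (Suc n))"
    and "Comp C (sg C (Suc (Suc n))) (tg C (Suc n)) = Comp C (tg C (Suc (Suc n))) (tg C (Suc n))"
  using assms unfolding globe_functor_def by (elim conjE allE[where x="Suc n"], simp)+

lemma sgit_hom:
  "category C \<Longrightarrow> globe_functor C \<Longrightarrow> sgit C k j \<in> hom C (Dk C j) (Dk C (j + k))"
  by (induction k) (auto intro: comp_hom sg_hom id_hom Dk_Ob)

lemma tgit_hom: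
  "category C \<Longrightarrow> globe_functor C \<Longrightarrow> tgit C k j \<in> hom C (Dk C j) (Dk C (j + k))"
  by (induction k) (auto intro: comp_hom tg_hom id_hom Dk_Ob)

lemma sigma_hom:
  "category C \<Longrightarrow> globe_functor C \<Longrightarrow> j \<le> i \<Longrightarrow> sigma C i j \<in> hom C (Dk C j) (Dk C i)"
  unfolding sigma_def using sgit_hom[of C "i - j" j] by simp

lemma tau_hom:
  "category C \<Longrightarrow> globe_functor C \<Longrightarrow> j \<le> i \<Longrightarrow> tau C i j \<in> hom C (Dk C j) (Dk C i)"
  unfolding tau_def using tgit_hom[of C "i - j" j] by simp

lemma sigma_Suc: "j \<le> i \<Longrightarrow> sigma C (Suc i) j = Comp C (sg C (Suc i)) (sigma C i j)"
  unfolding sigma_def by (simp add: Suc_diff_le)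

lemma tau_Suc: "j \<le> i \<Longrightarrow> tau C (Suc i) j = Comp C (tg C (Suc i)) (tau C i j)"
  unfolding tau_def by (simp add: Suc_diff_le)

lemma sigma_one: "category C \<Longrightarrow> globe_functor C \<Longrightarrow> sigma C (Suc n) n = sg C (Suc n)"
  using sigma_Suc[of n n C] comp_id_right[OF _ sg_hom] by (simp add: sigma_def)

lemma tau_one: "category C \<Longrightarrow> globe_functor C \<Longrightarrow> tau C (Suc n) n = tg C (Suc n)"
  using tau_Suc[of n n C] comp_id_right[OF _ tg_hom] by (simp add: tau_def)

lemma sg_tau:
  assumes C: "category C" "globe_functor C" and j: "j < i"
  shows "Comp C (sg C (Suc i)) (tau C i j) = tau C (Suc i) j"
proof -
  obtain k where i: "i = Suc k" and jk: "j \<le> k" using j by (cases i) auto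
  have "Comp C (sg C (Suc i)) (tau C i j) = Comp C (sg C (Suc i)) (Comp C (tg C i) (tau C k j))"
    using tau_Suc[OF jk, where C=C] i by simp
  also have "\<dots> = Comp C (Comp C (sg C (Suc i)) (tg C i)) (tau C k j)"
    using comp_assoc[OF C(1) tau_hom[OF C jk] tg_hom[OF C(2)] sg_hom[OF C(2)]] i by simp
  also have "\<dots> = Comp C (Comp C (tg C (Suc i)) (tg C i)) (tau C k j)"
    using globular_relations(2)[OF C(2), of k] i by simp
  also have "\<dots> = tau C (Suc i) j"
    using comp_assoc[OF C(1) tau_hom[OF C jk] tg_hom[OF C(2)] tg_hom[OF C(2)]] i tau_Suc[OF jk, where C=C]
      tau_Suc[of j i C] jk by simp
  finally show ?thesis .
qed

lemma tg_sigma: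
  assumes C: "category C" "globe_functor C" and j: "j < i"
  shows "Comp C (tg C (Suc i)) (sigma C i j) = sigma C (Suc i) j"
proof -
  obtain k where i: "i = Suc k" and jk: "j \<le> k" using j by (cases i) auto
  have "Comp C (tg C (Suc i)) (sigma C i j) = Comp C (tg C (Suc i)) (Comp C (sg C i) (sigma C k j))"
    using sigma_Suc[OF jk, where C=C] i by simp
  also have "\<dots> = Comp C (Comp C (tg C (Suc i)) (sg C i)) (sigma C k j)"
    using comp_assoc[OF C(1) sigma_hom[OF C jk] sg_hom[OF C(2)] tg_hom[OF C(2)]] i by simp
  also have "\<dots> = Comp C (Comp C (sg C (Suc i)) (sg C i)) (sigma C k j)"
    using globular_relations(1)[OF C(2), of k] i by simp
  also have "\<dots> = sigma C (Suc i) j"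
    using comp_assoc[OF C(1) sigma_hom[OF C jk] sg_hom[OF C(2)] sg_hom[OF C(2)]] i sigma_Suc[OF jk, where C=C]
      sigma_Suc[of j i C] jk by simp
  finally show ?thesis .
qed

section \<open>The globular sums of a pregroupoidal structure\<close>

lemma psum_colimit:
  "pregroupoidal C P \<Longrightarrow> j < i \<Longrightarrow>
   is_colimit C [i, i] [j] (Psum P i j) (\<lambda>k. if k = 0 then eps1 P i j else eps2 P i j)"
  unfolding pregroupoidal_def by auto

lemma psum_cocone:
  assumes "pregroupoidal C P" and "j < i"
  shows "eps1 P i j \<in> hom C (Dk C i) (Psum P i j)" and "eps2 P i j \<in> hom C (Dk C i) (Psum P i j)"
    and "Comp C (eps1 P i j) (sigma C i j) = Comp C (eps2 P i j) (tau C i j)"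
    and "Psum P i j \<in> Ob C"
  using psum_colimit[OF assms] unfolding is_colimit_def is_cocone_def by force+

lemma nab_hom: "pregroupoidal C P \<Longrightarrow> j < i \<Longrightarrow> nab P i j \<in> hom C (Dk C i) (Psum P i j)"
  unfolding pregroupoidal_def by auto

lemma psum_map:
  assumes C: "category C" "globe_functor C" and P: "pregroupoidal C P"
    and j: "j < i" "j < i'" and r: "r \<in> hom C (Dk C i) (Dk C i')"
    and r_sigma: "Comp C r (sigma C i j) = sigma C i' j"
    and r_tau: "Comp C r (tau C i j) = tau C i' j"
  obtains m where "m \<in> hom C (Psum P i j) (Psum P i' j)"
    and "Comp C m (eps1 P i j) = Comp C (eps1 P i' j) r"
    and "Comp C m (eps2 P i j) = Comp C (eps2 P i' j) r"
proof -
  note e = psum_cocone[OF P j(2)]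
  define f where "f = (\<lambda>k::nat. if k = 0 then Comp C (eps1 P i' j) r else Comp C (eps2 P i' j) r)"
  have "Comp C (Comp C (eps1 P i' j) r) (sigma C i j) = Comp C (eps1 P i' j) (sigma C i' j)"
    using comp_assoc[OF C(1) sigma_hom[OF C, of j i] r e(1)] j r_sigma by simp
  also have "\<dots> = Comp C (eps2 P i' j) (tau C i' j)" using e(3) .
  also have "\<dots> = Comp C (Comp C (eps2 P i' j) r) (tau C i j)"
    using comp_assoc[OF C(1) tau_hom[OF C, of j i] r e(2)] j r_tau by simp
  finally have "is_cocone C [i, i] [j] (Psum P i' j) f"
    using comp_hom[OF C(1) r e(1)] comp_hom[OF C(1) r e(2)] e(4)
    unfolding is_cocone_def f_def by (auto simp: less_Suc_eq)
  then have "\<exists>!m. m \<in> hom C (Psum P i j) (Psum P i' j) \<and>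
      (\<forall>k < length [i, i]. Comp C m (if k = 0 then eps1 P i j else eps2 P i j) = f k)"
    using psum_colimit[OF P j(1)] unfolding is_colimit_def by blast
  then obtain m where m: "m \<in> hom C (Psum P i j) (Psum P i' j)"
    and legs: "\<forall>k < length [i, i]. Comp C m (if k = 0 then eps1 P i j else eps2 P i j) = f k"
    by blast
  have "Comp C m (eps1 P i j) = f 0" and "Comp C m (eps2 P i j) = f 1"
    using legs[rule_format, of 0] legs[rule_format, of 1] by simp_all
  then show ?thesis using that[OF m] unfolding f_def by simp
qed

lemma nab_top:
  assumes "pregroupoidal C P"
  shows "Comp C (nab P (Suc n) n) (sg C (Suc n)) = Comp C (eps2 P (Suc n) n) (sg C (Suc n))"
    and "Comp C (nab P (Suc n) n) (tg C (Suc n)) = Comp C (eps1 P (Suc n) n) (tg C (Suc n))"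
  using assms unfolding pregroupoidal_def by (elim conjE allE[where x="Suc n"], simp)+

lemma nab_natural:
  assumes "pregroupoidal C P" and "j < i" and "m \<in> hom C (Psum P i j) (Psum P (Suc i) j)"
  shows "Comp C m (eps1 P i j) = Comp C (eps1 P (Suc i) j) (sg C (Suc i)) \<Longrightarrow>
         Comp C m (eps2 P i j) = Comp C (eps2 P (Suc i) j) (sg C (Suc i)) \<Longrightarrow>
         Comp C (nab P (Suc i) j) (sg C (Suc i)) = Comp C m (nab P i j)"
    and "Comp C m (eps1 P i j) = Comp C (eps1 P (Suc i) j) (tg C (Suc i)) \<Longrightarrow>
         Comp C m (eps2 P i j) = Comp C (eps2 P (Suc i) j) (tg C (Suc i)) \<Longrightarrow>
         Comp C (nab P (Suc i) j) (tg C (Suc i)) = Comp C m (nab P i j)"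
  using assms unfolding pregroupoidal_def
  by (elim conjE allE[where x="Suc i"] allE[where x=j], simp)+

lemma kap_axioms:
  assumes "pregroupoidal C P"
  shows "kap P n \<in> hom C (Dk C (Suc n)) (Dk C n)"
    and "Comp C (kap P n) (sg C (Suc n)) = Idm C (Dk C n)"
    and "Comp C (kap P n) (tg C (Suc n)) = Idm C (Dk C n)"
  using assms unfolding pregroupoidal_def by simp_all

lemma winv_axioms:
  assumes "pregroupoidal C P"
  shows "winv P (Suc n) n \<in> hom C (Dk C (Suc n)) (Dk C (Suc n))"
    and "Comp C (winv P (Suc n) n) (sg C (Suc n)) = tg C (Suc n)"
    and "Comp C (winv P (Suc n) n) (tg C (Suc n)) = sg C (Suc n)"
  using assms unfolding pregroupoidal_def
  by (elim conjE allE[where x="Suc n"] allE[where x=n], simp)+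

section \<open>Composition in an infinity-groupoid\<close>

locale groupoid_with_pregr =
  fixes C :: "('o, 'm, 'x) gcat_scheme" and P :: "('o, 'm) pregr" and G :: "('o, 'm, 'a) presh"
  assumes groupoid: "infty_groupoid C G" and pregr: "pregroupoidal C P"
begin

lemma presh: "presheaf C G"
  using groupoid unfolding infty_groupoid_def by (rule conjunct1[OF conjunct2])

lemma cat: "category C" and globe: "globe_functor C"
proof -
  have "contractible C" using groupoid unfolding infty_groupoid_def by (rule conjunct1)
  then have "globular_extension C" unfolding contractible_def by (rule conjunct1)
  then show "category C" "globe_functor C" unfolding globular_extension_def
    by (rule conjunct1, rule conjunct1[OF conjunct2])
qed

abbreviation arrows :: "nat \<Rightarrow> 'a set" where
  "arrows n \<equiv> Gob G (Dk C n)"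

definition composable :: "nat \<Rightarrow> nat \<Rightarrow> 'a \<Rightarrow> 'a \<Rightarrow> bool" where
  "composable i j v u \<longleftrightarrow> v \<in> arrows i \<and> u \<in> arrows i \<and>
     Gmor G (sigma C i j) v = Gmor G (tau C i j) u"

definition represents :: "nat \<Rightarrow> nat \<Rightarrow> 'a \<Rightarrow> 'a \<Rightarrow> 'a \<Rightarrow> bool" where
  "represents i j x v u \<longleftrightarrow> x \<in> Gob G (Psum P i j) \<and>
     Gmor G (eps1 P i j) x = v \<and> Gmor G (eps2 P i j) x = u"

lemma composable_top:
  "composable (Suc n) n v u \<longleftrightarrow> v \<in> arrows (Suc n) \<and> u \<in> arrows (Suc n) \<and>
     src C G (Suc n) v = tgt C G (Suc n) u"
  unfolding composable_def src_def tgt_def sigma_one[OF cat globe] tau_one[OF cat globe] ..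

lemma psum_bij:
  assumes "j < i"
  shows "bij_betw (\<lambda>x. [Gmor G (eps1 P i j) x, Gmor G (eps2 P i j) x])
           (Gob G (Psum P i j)) (fiber_prod C G [i, i] [j])"
proof -
  have "is_table [i, i] [j]" using assms unfolding is_table_def by auto
  then have "bij_betw (\<lambda>x. map (\<lambda>k. Gmor G (if k = 0 then eps1 P i j else eps2 P i j) x)
      [0..<length [i, i]]) (Gob G (Psum P i j)) (fiber_prod C G [i, i] [j])"
    using groupoid psum_colimit[OF pregr assms] unfolding infty_groupoid_def by blast
  then show ?thesis by (simp add: upt_rec)
qed

lemma represents_exists:
  assumes "j < i" and "composable i j v u"
  obtains x where "represents i j x v u"
proof -
  have "[v, u] \<in> fiber_prod C G [i, i] [j]"
    using assms(2) unfolding fiber_prod_def composable_def by (auto simp: less_Suc_eq)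
  then have "[v, u] \<in> (\<lambda>x. [Gmor G (eps1 P i j) x, Gmor G (eps2 P i j) x]) ` Gob G (Psum P i j)"
    using bij_betw_imp_surj_on[OF psum_bij[OF assms(1)]] by simp
  then obtain x where "[v, u] = [Gmor G (eps1 P i j) x, Gmor G (eps2 P i j) x]"
    and "x \<in> Gob G (Psum P i j)"
    by (rule imageE)
  then show ?thesis using that unfolding represents_def by simp
qed

lemma represents_unique:
  "j < i \<Longrightarrow> represents i j x v u \<Longrightarrow> represents i j y v u \<Longrightarrow> x = y"
  using psum_bij[of j i] unfolding bij_betw_def inj_on_def represents_def by auto

lemma gcomp_represents:
  assumes "j < i" and "represents i j x v u"
  shows "gcomp C P G i j v u = Gmor G (nab P i j) x"
proof -
  have "(THE y. represents i j y v u) = x"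
    using assms represents_unique by blast
  then show ?thesis unfolding gcomp_def represents_def by simp
qed

lemma gcomp_closed:
  assumes "j < i" and "composable i j v u"
  shows "gcomp C P G i j v u \<in> arrows i"
proof -
  obtain x where x: "represents i j x v u" using represents_exists[OF assms] .
  then have "x \<in> Gob G (Psum P i j)" unfolding represents_def by simp
  then show ?thesis
    using gcomp_represents[OF assms(1) x] presheaf_in[OF presh nab_hom[OF pregr assms(1)]] by simp
qed

lemma gcomp_top:
  assumes "composable (Suc n) n v u"
  shows "src C G (Suc n) (gcomp C P G (Suc n) n v u) = src C G (Suc n) u"
    and "tgt C G (Suc n) (gcomp C P G (Suc n) n v u) = tgt C G (Suc n) v"
proof -
  obtain x where x: "represents (Suc n) n x v u" using represents_exists[OF lessI assms] .
  then have x_in: "x \<in> Gob G (Psum P (Suc n) n)" unfolding represents_def by simp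
  note e = psum_cocone[OF pregr lessI, of n] and nab = nab_hom[OF pregr lessI, of n]
  have "src C G (Suc n) (gcomp C P G (Suc n) n v u) = Gmor G (Comp C (nab P (Suc n) n) (sg C (Suc n))) x"
    unfolding src_def gcomp_represents[OF lessI x] using presheaf_comp[OF presh sg_hom[OF globe] nab x_in] by simp
  also have "\<dots> = Gmor G (Comp C (eps2 P (Suc n) n) (sg C (Suc n))) x" using nab_top(1)[OF pregr] by simp
  also have "\<dots> = src C G (Suc n) u"
    using presheaf_comp[OF presh sg_hom[OF globe] e(2) x_in] x unfolding src_def represents_def by simp
  finally show "src C G (Suc n) (gcomp C P G (Suc n) n v u) = src C G (Suc n) u" .
  have "tgt C G (Suc n) (gcomp C P G (Suc n) n v u) = Gmor G (Comp C (nab P (Suc n) n) (tg C (Suc n))) x"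
    unfolding tgt_def gcomp_represents[OF lessI x] using presheaf_comp[OF presh tg_hom[OF globe] nab x_in] by simp
  also have "\<dots> = Gmor G (Comp C (eps1 P (Suc n) n) (tg C (Suc n))) x" using nab_top(2)[OF pregr] by simp
  also have "\<dots> = tgt C G (Suc n) v"
    using presheaf_comp[OF presh tg_hom[OF globe] e(1) x_in] x unfolding tgt_def represents_def by simp
  finally show "tgt C G (Suc n) (gcomp C P G (Suc n) n v u) = tgt C G (Suc n) v" .
qed

lemma gcomp_natural:
  assumes j: "j < i" "j < i'" and r: "r \<in> hom C (Dk C i) (Dk C i')"
    and r_sigma: "Comp C r (sigma C i j) = sigma C i' j"
    and r_tau: "Comp C r (tau C i j) = tau C i' j"
    and nab_r: "\<And>m. m \<in> hom C (Psum P i j) (Psum P i' j) \<Longrightarrow>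
       Comp C m (eps1 P i j) = Comp C (eps1 P i' j) r \<Longrightarrow>
       Comp C m (eps2 P i j) = Comp C (eps2 P i' j) r \<Longrightarrow>
       Comp C (nab P i' j) r = Comp C m (nab P i j)"
    and vu: "composable i' j v u"
  shows "Gmor G r (gcomp C P G i' j v u) = gcomp C P G i j (Gmor G r v) (Gmor G r u)"
proof -
  obtain m where m: "m \<in> hom C (Psum P i j) (Psum P i' j)"
    "Comp C m (eps1 P i j) = Comp C (eps1 P i' j) r" "Comp C m (eps2 P i j) = Comp C (eps2 P i' j) r"
    using psum_map[OF cat globe pregr j r r_sigma r_tau] .
  obtain x where x: "represents i' j x v u" using represents_exists[OF j(2) vu] .
  then have x_in: "x \<in> Gob G (Psum P i' j)" unfolding represents_def by simp
  note e = psum_cocone[OF pregr j(1)] and e' = psum_cocone[OF pregr j(2)]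
  have "represents i j (Gmor G m x) (Gmor G r v) (Gmor G r u)"
    using presheaf_in[OF presh m(1) x_in] x m
      presheaf_comp[OF presh e(1) m(1) x_in] presheaf_comp[OF presh r e'(1) x_in]
      presheaf_comp[OF presh e(2) m(1) x_in] presheaf_comp[OF presh r e'(2) x_in]
    unfolding represents_def by simp
  then have "gcomp C P G i j (Gmor G r v) (Gmor G r u) = Gmor G (nab P i j) (Gmor G m x)"
    using gcomp_represents[OF j(1)] by simp
  also have "\<dots> = Gmor G (Comp C (nab P i' j) r) x"
    using presheaf_comp[OF presh nab_hom[OF pregr j(1)] m(1) x_in] nab_r[OF m] by simp
  also have "\<dots> = Gmor G r (gcomp C P G i' j v u)"
    using presheaf_comp[OF presh r nab_hom[OF pregr j(2)] x_in] gcomp_represents[OF j(2) x] by simp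
  finally show ?thesis by simp
qed

lemma gcomp_src:
  assumes j: "j < i" and vu: "composable (Suc i) j v u"
  shows "src C G (Suc i) (gcomp C P G (Suc i) j v u) =
         gcomp C P G i j (src C G (Suc i) v) (src C G (Suc i) u)"
proof -
  have "Comp C (sg C (Suc i)) (sigma C i j) = sigma C (Suc i) j"
    using sigma_Suc[of j i C] j by simp
  from gcomp_natural[OF j less_SucI[OF j] sg_hom[OF globe] this sg_tau[OF cat globe j]
      nab_natural(1)[OF pregr j] vu]
  show ?thesis unfolding src_def .
qed

lemma gcomp_tgt:
  assumes j: "j < i" and vu: "composable (Suc i) j v u"
  shows "tgt C G (Suc i) (gcomp C P G (Suc i) j v u) =
         gcomp C P G i j (tgt C G (Suc i) v) (tgt C G (Suc i) u)"
proof -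
  have "Comp C (tg C (Suc i)) (tau C i j) = tau C (Suc i) j"
    using tau_Suc[of j i C] j by simp
  from gcomp_natural[OF j less_SucI[OF j] tg_hom[OF globe] tg_sigma[OF cat globe j] this
      nab_natural(2)[OF pregr j] vu]
  show ?thesis unfolding tgt_def .
qed

lemma composable_of_src:
  assumes j: "j < i" and v: "v \<in> arrows (Suc i)" and u: "u \<in> arrows (Suc i)"
    and src_vu: "Gmor G (sigma C i j) (src C G (Suc i) v) = Gmor G (tau C i j) (src C G (Suc i) u)"
  shows "composable (Suc i) j v u"
proof -
  have "Gmor G (sigma C (Suc i) j) v = Gmor G (sigma C i j) (src C G (Suc i) v)"
    using presheaf_comp[OF presh sigma_hom[OF cat globe, of j i] sg_hom[OF globe] v] sigma_Suc[of j i C] j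
    unfolding src_def by simp
  moreover have "Gmor G (tau C (Suc i) j) u = Gmor G (tau C i j) (src C G (Suc i) u)"
    using presheaf_comp[OF presh tau_hom[OF cat globe, of j i] sg_hom[OF globe] u] sg_tau[OF cat globe j] j
    unfolding src_def by simp
  ultimately show ?thesis using v u src_vu unfolding composable_def by simp
qed

section \<open>Homotopy\<close>

lemma homotopic_refl:
  assumes u: "u \<in> arrows n"
  shows "homotopic C G n u u"
proof -
  note k = kap_axioms[OF pregr, of n]
  have "Gmor G (kap P n) u \<in> arrows (Suc n)" using presheaf_in[OF presh k(1) u] .
  moreover have "src C G (Suc n) (Gmor G (kap P n) u) = u" "tgt C G (Suc n) (Gmor G (kap P n) u) = u"
    using presheaf_comp[OF presh sg_hom[OF globe] k(1) u] presheaf_comp[OF presh tg_hom[OF globe] k(1) u]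
      k presheaf_id[OF presh Dk_Ob[OF globe] u] unfolding src_def tgt_def by simp_all
  ultimately show ?thesis unfolding homotopic_def by auto
qed

lemma homotopic_sym:
  assumes "homotopic C G n u v"
  shows "homotopic C G n v u"
proof -
  obtain a where a: "a \<in> arrows (Suc n)" "src C G (Suc n) a = u" "tgt C G (Suc n) a = v"
    using assms unfolding homotopic_def by auto
  note w = winv_axioms[OF pregr, of n]
  have "Gmor G (winv P (Suc n) n) a \<in> arrows (Suc n)" using presheaf_in[OF presh w(1) a(1)] .
  moreover have "src C G (Suc n) (Gmor G (winv P (Suc n) n) a) = v"
    "tgt C G (Suc n) (Gmor G (winv P (Suc n) n) a) = u"
    using presheaf_comp[OF presh sg_hom[OF globe] w(1) a(1)] presheaf_comp[OF presh tg_hom[OF globe] w(1) a(1)]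
      w a(2,3) unfolding src_def tgt_def by simp_all
  ultimately show ?thesis unfolding homotopic_def by auto
qed

lemma homotopic_trans:
  assumes "homotopic C G n u v" and "homotopic C G n v w"
  shows "homotopic C G n u w"
proof -
  obtain a where a: "a \<in> arrows (Suc n)" "src C G (Suc n) a = u" "tgt C G (Suc n) a = v"
    using assms(1) unfolding homotopic_def by auto
  obtain b where b: "b \<in> arrows (Suc n)" "src C G (Suc n) b = v" "tgt C G (Suc n) b = w"
    using assms(2) unfolding homotopic_def by auto
  have ba: "composable (Suc n) n b a" using a b composable_top by simp
  show ?thesis
    using gcomp_closed[OF lessI ba] gcomp_top[OF ba] a b unfolding homotopic_def by auto
qed

lemma homrel_equiv: "equiv (arrows n) (homrel C G n)"
proof (rule equivI)
  show "refl_on (arrows n) (homrel C G n)"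
    by (rule refl_onI) (auto simp: homrel_def intro: homotopic_refl)
  show "homrel C G n \<subseteq> arrows n \<times> arrows n" by (auto simp: homrel_def)
  show "sym (homrel C G n)"
    by (rule symI) (auto simp: homrel_def intro: homotopic_sym)
  show "trans (homrel C G n)"
    by (rule transI) (auto simp: homrel_def intro: homotopic_trans)
qed

lemma homotopic_gcomp:
  assumes "homotopic C G (Suc n) u u'" and "homotopic C G (Suc n) v v'"
    and vu: "src C G (Suc n) v = tgt C G (Suc n) u"
  shows "homotopic C G (Suc n) (gcomp C P G (Suc n) n v u) (gcomp C P G (Suc n) n v' u')"
proof -
  obtain a where a: "a \<in> arrows (Suc (Suc n))" "src C G (Suc (Suc n)) a = u" "tgt C G (Suc (Suc n)) a = u'"
    using assms(1) unfolding homotopic_def by auto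
  obtain b where b: "b \<in> arrows (Suc (Suc n))" "src C G (Suc (Suc n)) b = v" "tgt C G (Suc (Suc n)) b = v'"
    using assms(2) unfolding homotopic_def by auto
  have ba: "composable (Suc (Suc n)) n b a"
    using composable_of_src[OF lessI b(1) a(1)] vu a(2) b(2)
    unfolding sigma_one[OF cat globe] tau_one[OF cat globe] src_def tgt_def by simp
  show ?thesis
    using gcomp_closed[OF _ ba] gcomp_src[OF lessI ba] gcomp_tgt[OF lessI ba] a b
    unfolding homotopic_def by auto
qed

end

theorem lemma4:
  fixes C :: "('o, 'm, 'x) gcat_scheme" and P :: "('o, 'm) pregr" and G :: "('o, 'm, 'a) presh"
  assumes "contractible C"
    and "pregroupoidal C P"
    and "infty_groupoid C G"
  shows "(\<forall>n. equiv (Gob G (Dk C n)) (homrel C G n)) \<and>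
         (\<forall>n \<ge> 1. \<forall>u \<in> Gob G (Dk C n). \<forall>u' \<in> Gob G (Dk C n). \<forall>v \<in> Gob G (Dk C n). \<forall>v' \<in> Gob G (Dk C n).
            homotopic C G n u u' \<and> homotopic C G n v v' \<and> src C G n v = tgt C G n u \<longrightarrow>
            homotopic C G n (gcomp C P G n (n - 1) v u) (gcomp C P G n (n - 1) v' u'))"
proof -
  interpret groupoid_with_pregr C P G using assms(2,3) by unfold_locales
  have "homotopic C G n (gcomp C P G n (n - 1) v u) (gcomp C P G n (n - 1) v' u')"
    if "n \<ge> 1" "homotopic C G n u u'" "homotopic C G n v v'" "src C G n v = tgt C G n u"
    for n u u' v v'
    using homotopic_gcomp[of "n - 1"] that by simp
  then show ?thesis using homrel_equiv by blast
qed

end
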